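(* Let $n\ge 2$ and let $\mathcal{F}=\{f_i\}_{i=1}^k$ be a unit-norm tight frame for $\mathbb{R}^n$ (or $\mathbb{C}^n$). Suppose there exist an index set $I\subseteq\{1,\dots,k\}$ with $|I|=p$ and unit-norm vectors $g_1,\dots,g_q$ such that $\{f_i\}_{i\notin I}\cup\{g_j\}_{j=1}^q$ is a unit-norm tight frame. Then, writing $\tilde f_i$ for the diagram vector of $f_i$, the sum of all entries of the Gramian $(\langle\tilde f_j,\tilde f_i\rangle)_{i,j\notin I}$ of the $k-p$ remaining diagram vectors is at most $q^2$, i.e. $\sum_{i,j\notin I}\langle\tilde f_i,\tilde f_j\rangle\le q^2$.
   Context: A unit-norm tight frame is a sequence of unit vectors $\{h_i\}$ for which there is $\lambda>0$ with $\sum_i|\langle f,h_i\rangle|^2=\lambda\|f\|^2$ for all $f$. Diagram vectors: for $f\in\mathbb{R}^n$, $\tilde f=\frac{1}{\sqrt{n-1}}\,v\in\mathbb{R}^{n(n-1)}$, where $v$ has as entries the differences $f(i)^2-f(j)^2$ for each pair $i<j$ (each exactly once) together with the products $\sqrt{2n}\,f(i)f(j)$ for each pair $i<j$ (each exactly once). For $f\in\mathbb{C}^n$, $\tilde f=\frac{1}{\sqrt{n-1}}\,v\in\mathbb{C}^{3n(n-1)/2}$, where $v$ has as entries $f(i)\overline{f(i)}-f(j)\overline{f(j)}$ for each pair $i<j$ (each exactly once) together with $\sqrt{n}\,f(i)\overline{f(j)}$ for each ordered pair $i\neq j$ (each exactly once). *)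

theory Defs
  imports Complex_Main
begin

text \<open>Vectors in R^n / C^n are represented as functions on nat; only the
coordinates 0..n-1 are used.\<close>

definition rinner :: "nat \<Rightarrow> (nat \<Rightarrow> real) \<Rightarrow> (nat \<Rightarrow> real) \<Rightarrow> real" where
  "rinner n x y = (\<Sum>l<n. x l * y l)"

definition cinner :: "nat \<Rightarrow> (nat \<Rightarrow> complex) \<Rightarrow> (nat \<Rightarrow> complex) \<Rightarrow> complex" where
  "cinner n x y = (\<Sum>l<n. x l * cnj (y l))"

definition rnorm :: "nat \<Rightarrow> (nat \<Rightarrow> real) \<Rightarrow> real" where
  "rnorm n x = sqrt (rinner n x x)"

definition cnorm :: "nat \<Rightarrow> (nat \<Rightarrow> complex) \<Rightarrow> real" where
  "cnorm n x = sqrt (\<Sum>l<n. (cmod (x l))\<^sup>2)"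

definition real_untf :: "nat \<Rightarrow> 'a set \<Rightarrow> ('a \<Rightarrow> nat \<Rightarrow> real) \<Rightarrow> bool" where
  "real_untf n K h \<longleftrightarrow> finite K \<and> (\<forall>i\<in>K. rnorm n (h i) = 1) \<and>
     (\<exists>c>0. \<forall>f. (\<Sum>i\<in>K. \<bar>rinner n f (h i)\<bar>\<^sup>2) = c * (rnorm n f)\<^sup>2)"

definition complex_untf :: "nat \<Rightarrow> 'a set \<Rightarrow> ('a \<Rightarrow> nat \<Rightarrow> complex) \<Rightarrow> bool" where
  "complex_untf n K h \<longleftrightarrow> finite K \<and> (\<forall>i\<in>K. cnorm n (h i) = 1) \<and>
     (\<exists>c>0. \<forall>f. (\<Sum>i\<in>K. (cmod (cinner n f (h i)))\<^sup>2) = c * (cnorm n f)\<^sup>2)"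

definition pairs_lt :: "nat \<Rightarrow> (nat \<times> nat) list" where
  "pairs_lt n = [(i, j). i \<leftarrow> [0..<n], j \<leftarrow> [0..<n], i < j]"

definition pairs_ne :: "nat \<Rightarrow> (nat \<times> nat) list" where
  "pairs_ne n = [(i, j). i \<leftarrow> [0..<n], j \<leftarrow> [0..<n], i \<noteq> j]"

definition real_diagram :: "nat \<Rightarrow> (nat \<Rightarrow> real) \<Rightarrow> real list" where
  "real_diagram n f = map (\<lambda>t. t / sqrt (real n - 1))
     (map (\<lambda>(i, j). (f i)\<^sup>2 - (f j)\<^sup>2) (pairs_lt n) @
      map (\<lambda>(i, j). sqrt (2 * real n) * f i * f j) (pairs_lt n))"

definition complex_diagram :: "nat \<Rightarrow> (nat \<Rightarrow> complex) \<Rightarrow> complex list" where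
  "complex_diagram n f = map (\<lambda>t. t / complex_of_real (sqrt (real n - 1)))
     (map (\<lambda>(i, j). f i * cnj (f i) - f j * cnj (f j)) (pairs_lt n) @
      map (\<lambda>(i, j). complex_of_real (sqrt (real n)) * f i * cnj (f j)) (pairs_ne n))"

definition rinner_list :: "real list \<Rightarrow> real list \<Rightarrow> real" where
  "rinner_list xs ys = sum_list (map2 (*) xs ys)"

definition cinner_list :: "complex list \<Rightarrow> complex list \<Rightarrow> complex" where
  "cinner_list xs ys = sum_list (map2 (\<lambda>x y. x * cnj y) xs ys)"

end

theory Submission
  imports Defs "HOL-Analysis.Convex"
begin

text \<open>The inner product of the diagram vectors of \<open>f\<close> and \<open>g\<close> is
  \<open>(n |\<langle>f, g\<rangle>|\<^sup>2 - \<parallel>f\<parallel>\<^sup>2 \<parallel>g\<parallel>\<^sup>2) / (n - 1)\<close>, so for the \<open>m\<close> remaining unit vectors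
  \<open>f\<^sub>a\<close> the Gramian sum is \<open>(n \<Sum>\<^sub>a\<^sub>,\<^sub>a\<^sub>' |\<langle>f\<^sub>a, f\<^sub>a\<^sub>'\<rangle>|\<^sup>2 - m\<^sup>2) / (n - 1)\<close>.
  Tracing the frame identity of the new frame over an orthonormal basis gives its frame bound
  \<open>(m + q) / n\<close>; testing it against its own vectors then shows that
  \<open>n \<Sum>\<^sub>a\<^sub>,\<^sub>a\<^sub>' |\<langle>f\<^sub>a, f\<^sub>a\<^sub>'\<rangle>|\<^sup>2 - m\<^sup>2 = n \<Sum>\<^sub>b\<^sub>,\<^sub>b\<^sub>' |\<langle>g\<^sub>b, g\<^sub>b\<^sub>'\<rangle>|\<^sup>2 - q\<^sup>2\<close>,
  and by Cauchy--Schwarz the right-hand side is at most \<open>(n - 1) q\<^sup>2\<close>.\<close>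

lemma sum_list_concat: "sum_list (concat xss) = sum_list (map sum_list xss)"
  by (induct xss) auto

lemma sum_list_map_upt_zero: "sum_list (map f [0..<n]) = (\<Sum>i<n. f i)"
  by (simp add: interv_sum_list_conv_sum_set_nat lessThan_atLeast0)

lemma sum_list_map_pairs_lt:
  "sum_list (map h (pairs_lt n)) = (\<Sum>i<n. \<Sum>j<n. if i < j then h (i, j) else 0)"
  unfolding pairs_lt_def
  by (simp add: sum_list_concat map_concat comp_def sum_list_map_upt_zero if_distrib cong: if_cong)

lemma sum_list_map_pairs_ne:
  "sum_list (map h (pairs_ne n)) = (\<Sum>i<n. \<Sum>j<n. if i \<noteq> j then h (i, j) else 0)"
  unfolding pairs_ne_def
  by (simp add: sum_list_concat map_concat comp_def sum_list_map_upt_zero if_distrib cong: if_cong)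

lemma double_sum_neq:
  fixes F :: "nat \<Rightarrow> nat \<Rightarrow> 'a::comm_ring_1"
  shows "(\<Sum>i<n. \<Sum>j<n. if i \<noteq> j then F i j else 0) = (\<Sum>i<n. \<Sum>j<n. F i j) - (\<Sum>i<n. F i i)"
proof -
  have "(\<Sum>i<n. \<Sum>j<n. F i j) = (\<Sum>i<n. \<Sum>j<n. (if i \<noteq> j then F i j else 0) + (if i = j then F i j else 0))"
    by (intro sum.cong refl) auto
  also have "\<dots> = (\<Sum>i<n. \<Sum>j<n. if i \<noteq> j then F i j else 0) + (\<Sum>i<n. F i i)"
    by (simp add: sum.distrib)
  finally show ?thesis by simp
qed

lemma double_sum_lt_symmetric:
  fixes F :: "nat \<Rightarrow> nat \<Rightarrow> 'a::comm_ring_1"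
  assumes "\<And>i j. F i j = F j i"
  shows "2 * (\<Sum>i<n. \<Sum>j<n. if i < j then F i j else 0) = (\<Sum>i<n. \<Sum>j<n. F i j) - (\<Sum>i<n. F i i)"
proof -
  have swap: "(\<Sum>i<n. \<Sum>j<n. if j < i then F i j else 0) = (\<Sum>i<n. \<Sum>j<n. if i < j then F i j else 0)"
    by (subst sum.swap) (intro sum.cong refl, simp add: assms)
  have "(\<Sum>i<n. \<Sum>j<n. if i \<noteq> j then F i j else 0)
      = (\<Sum>i<n. \<Sum>j<n. (if i < j then F i j else 0) + (if j < i then F i j else 0))"
    by (intro sum.cong refl) auto
  also have "\<dots> = 2 * (\<Sum>i<n. \<Sum>j<n. if i < j then F i j else 0)"
    by (simp only: sum.distrib swap mult_2)
  finally show ?thesis by (simp add: double_sum_neq)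
qed

lemma double_sum_diff_mult_diff:
  fixes u v :: "nat \<Rightarrow> 'a::comm_ring_1"
  shows "(\<Sum>i<n. \<Sum>j<n. (u i - u j) * (v i - v j))
    = 2 * of_nat n * (\<Sum>i<n. u i * v i) - 2 * (\<Sum>i<n. u i) * (\<Sum>i<n. v i)"
proof -
  have "(\<Sum>i<n. \<Sum>j<n. (u i - u j) * (v i - v j))
      = (\<Sum>i<n. \<Sum>j<n. u i * v i + u j * v j - u i * v j - u j * v i)"
    by (intro sum.cong refl) (simp add: algebra_simps)
  also have "\<dots> = (\<Sum>i<n. \<Sum>j<n. u i * v i) + (\<Sum>i<n. \<Sum>j<n. u j * v j)
      - (\<Sum>i<n. \<Sum>j<n. u i * v j) - (\<Sum>i<n. \<Sum>j<n. u j * v i)"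
    by (simp only: sum_subtractf sum.distrib)
  also have "(\<Sum>i<n. \<Sum>j<n. u i * v i) = of_nat n * (\<Sum>i<n. u i * v i)"
    by (simp add: sum_distrib_left)
  also have "(\<Sum>i<n. \<Sum>j<n. u j * v j) = of_nat n * (\<Sum>i<n. u i * v i)"
    by simp
  also have "(\<Sum>i<n. \<Sum>j<n. u i * v j) = (\<Sum>i<n. u i) * (\<Sum>i<n. v i)"
    by (simp add: sum_product)
  also have "(\<Sum>i<n. \<Sum>j<n. u j * v i) = (\<Sum>i<n. u i) * (\<Sum>i<n. v i)"
    by (subst sum_product) (rule sum.swap)
  finally show ?thesis by (simp only: mult_2 distrib_right diff_diff_eq)
qed

subsection \<open>Inner products of diagram vectors\<close>

lemma map2_map_map: "map2 F (map a xs) (map b xs) = map (\<lambda>x. F (a x) (b x)) xs"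
  by (induct xs) auto

lemma rinner_list_append:
  "length xs = length ys \<Longrightarrow> rinner_list (xs @ xs') (ys @ ys') = rinner_list xs ys + rinner_list xs' ys'"
  by (simp add: rinner_list_def)

lemma rinner_list_map_map: "rinner_list (map a xs) (map b xs) = sum_list (map (\<lambda>x. a x * b x) xs)"
  by (simp add: rinner_list_def map2_map_map)

lemma cinner_list_append:
  "length xs = length ys \<Longrightarrow> cinner_list (xs @ xs') (ys @ ys') = cinner_list xs ys + cinner_list xs' ys'"
  by (simp add: cinner_list_def)

lemma cinner_list_map_map: "cinner_list (map a xs) (map b xs) = sum_list (map (\<lambda>x. a x * cnj (b x)) xs)"
  by (simp add: cinner_list_def map2_map_map)

lemma rnorm_power2: "(rnorm n x)\<^sup>2 = rinner n x x"
  by (simp add: rnorm_def rinner_def sum_nonneg)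

lemma cnorm_power2: "(cnorm n x)\<^sup>2 = (\<Sum>l<n. (cmod (x l))\<^sup>2)"
  by (simp add: cnorm_def sum_nonneg)

lemma rinner_list_real_diagram:
  assumes "n \<ge> 2"
  shows "rinner_list (real_diagram n f) (real_diagram n g)
    = (real n * (rinner n f g)\<^sup>2 - (rnorm n f)\<^sup>2 * (rnorm n g)\<^sup>2) / (real n - 1)"
proof -
  define s where "s = sqrt (real n - 1)"
  define u where "u = (\<lambda>i. (f i)\<^sup>2)"
  define v where "v = (\<lambda>i. (g i)\<^sup>2)"
  define x where "x = (\<lambda>i. f i * g i)"
  define P where "P = (\<Sum>i<n. \<Sum>j<n. if i < j then (u i - u j) * (v i - v j) else 0)"
  define Q where "Q = (\<Sum>i<n. \<Sum>j<n. if i < j then x i * x j else 0)"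
  have s2: "s * s = real n - 1"
    using assms by (simp add: s_def)
  have diagram: "real_diagram n h = map (\<lambda>(i, j). ((h i)\<^sup>2 - (h j)\<^sup>2) / s) (pairs_lt n)
      @ map (\<lambda>(i, j). sqrt (2 * real n) * h i * h j / s) (pairs_lt n)" for h
    unfolding real_diagram_def s_def by (simp add: case_prod_beta comp_def)
  have "rinner_list (real_diagram n f) (real_diagram n g)
      = (\<Sum>i<n. \<Sum>j<n. if i < j then (u i - u j) * (v i - v j) / (s * s) else 0)
      + (\<Sum>i<n. \<Sum>j<n. if i < j then 2 * real n * (x i * x j) / (s * s) else 0)"
    unfolding diagram
    by (simp only: rinner_list_append length_map rinner_list_map_map sum_list_map_pairs_lt,
        intro arg_cong2[where f = "(+)"] sum.cong refl) (auto simp: u_def v_def x_def algebra_simps)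
  also have "\<dots> = (P + 2 * real n * Q) / (real n - 1)"
    unfolding P_def Q_def s2[symmetric]
    by (simp add: add_divide_distrib sum_divide_distrib sum_distrib_left if_distrib[of "\<lambda>t. t / _"]
        if_distrib[of "\<lambda>t. _ * t"] cong: if_cong)
  finally have expand: "rinner_list (real_diagram n f) (real_diagram n g) = (P + 2 * real n * Q) / (real n - 1)" .
  have uv: "(\<Sum>i<n. u i * v i) = (\<Sum>i<n. x i * x i)"
    by (simp add: u_def v_def x_def power2_eq_square algebra_simps)
  have "2 * P = (\<Sum>i<n. \<Sum>j<n. (u i - u j) * (v i - v j))"
    unfolding P_def by (subst double_sum_lt_symmetric) (auto simp: algebra_simps)
  also have "\<dots> = 2 * real n * (\<Sum>i<n. x i * x i) - 2 * (\<Sum>i<n. u i) * (\<Sum>i<n. v i)"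
    by (simp only: double_sum_diff_mult_diff uv of_nat_id)
  finally have P: "P = real n * (\<Sum>i<n. x i * x i) - (\<Sum>i<n. u i) * (\<Sum>i<n. v i)"
    by simp
  have "2 * Q = (\<Sum>i<n. x i)\<^sup>2 - (\<Sum>i<n. x i * x i)"
    unfolding Q_def by (subst double_sum_lt_symmetric) (auto simp: power2_eq_square sum_product)
  then have "2 * real n * Q = real n * (\<Sum>i<n. x i)\<^sup>2 - real n * (\<Sum>i<n. x i * x i)"
    by (metis mult.assoc mult.commute right_diff_distrib)
  moreover have "rinner n f g = (\<Sum>i<n. x i)" "(rnorm n f)\<^sup>2 = (\<Sum>i<n. u i)" "(rnorm n g)\<^sup>2 = (\<Sum>i<n. v i)"
    unfolding rnorm_power2 by (simp_all add: rinner_def x_def u_def v_def power2_eq_square)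
  ultimately show ?thesis
    unfolding expand P by simp
qed

lemma cinner_list_complex_diagram:
  assumes "n \<ge> 2"
  shows "cinner_list (complex_diagram n f) (complex_diagram n g)
    = complex_of_real ((real n * (cmod (cinner n f g))\<^sup>2 - (cnorm n f)\<^sup>2 * (cnorm n g)\<^sup>2) / (real n - 1))"
proof -
  define s where "s = complex_of_real (sqrt (real n - 1))"
  define r where "r = complex_of_real (sqrt (real n))"
  define u where "u = (\<lambda>i. f i * cnj (f i))"
  define v where "v = (\<lambda>i. g i * cnj (g i))"
  define y where "y = (\<lambda>i. f i * cnj (g i))"
  define P where "P = (\<Sum>i<n. \<Sum>j<n. if i < j then (u i - u j) * (v i - v j) else 0)"
  define Q where "Q = (\<Sum>i<n. \<Sum>j<n. if i \<noteq> j then y i * cnj (y j) else 0)"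
  define Y where "Y = (\<Sum>i<n. y i)"
  have s2: "s * s = of_real (real n - 1)"
    using assms by (simp add: s_def flip: of_real_mult)
  have r2: "r * r = of_nat n"
    by (simp add: r_def flip: of_real_mult)
  have diagram: "complex_diagram n h = map (\<lambda>(i, j). (h i * cnj (h i) - h j * cnj (h j)) / s) (pairs_lt n)
      @ map (\<lambda>(i, j). r * h i * cnj (h j) / s) (pairs_ne n)" for h
    unfolding complex_diagram_def s_def r_def by (simp add: case_prod_beta comp_def)
  have "cinner_list (complex_diagram n f) (complex_diagram n g)
      = (\<Sum>i<n. \<Sum>j<n. if i < j then (u i - u j) * (v i - v j) / (s * s) else 0)
      + (\<Sum>i<n. \<Sum>j<n. if i \<noteq> j then of_nat n * (y i * cnj (y j)) / (s * s) else 0)"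
    unfolding diagram
    by (simp only: cinner_list_append length_map cinner_list_map_map sum_list_map_pairs_lt
        sum_list_map_pairs_ne, intro arg_cong2[where f = "(+)"] sum.cong refl)
      (use r2 in \<open>auto simp: u_def v_def y_def s_def r_def algebra_simps\<close>)
  also have "\<dots> = (P + of_nat n * Q) / of_real (real n - 1)"
    unfolding P_def Q_def s2[symmetric]
    by (simp add: add_divide_distrib sum_divide_distrib sum_distrib_left if_distrib[of "\<lambda>t. t / _"]
        if_distrib[of "\<lambda>t. _ * t"] cong: if_cong)
  finally have expand: "cinner_list (complex_diagram n f) (complex_diagram n g)
      = (P + of_nat n * Q) / of_real (real n - 1)" .
  have uv: "(\<Sum>i<n. u i * v i) = (\<Sum>i<n. y i * cnj (y i))"
    by (simp add: u_def v_def y_def algebra_simps)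
  have "2 * P = (\<Sum>i<n. \<Sum>j<n. (u i - u j) * (v i - v j))"
    unfolding P_def by (subst double_sum_lt_symmetric) (auto simp: algebra_simps)
  also have "\<dots> = 2 * (of_nat n * (\<Sum>i<n. y i * cnj (y i)) - (\<Sum>i<n. u i) * (\<Sum>i<n. v i))"
    unfolding double_sum_diff_mult_diff uv by (simp add: algebra_simps)
  finally have P: "P = of_nat n * (\<Sum>i<n. y i * cnj (y i)) - (\<Sum>i<n. u i) * (\<Sum>i<n. v i)"
    by (subst (asm) mult_cancel_left) simp
  have Q: "Q = Y * cnj Y - (\<Sum>i<n. y i * cnj (y i))"
    unfolding Q_def Y_def double_sum_neq by (simp add: sum_product cnj_sum)
  have "Y * cnj Y = of_real ((cmod (cinner n f g))\<^sup>2)"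
    unfolding complex_norm_square by (simp add: Y_def y_def cinner_def)
  moreover have "(\<Sum>i<n. u i) = of_real ((cnorm n f)\<^sup>2)" "(\<Sum>i<n. v i) = of_real ((cnorm n g)\<^sup>2)"
    by (simp_all only: cnorm_power2 of_real_sum complex_norm_square u_def v_def)
  ultimately show ?thesis
    unfolding expand P Q by (simp add: algebra_simps)
qed

subsection \<open>A tight frame split into two families\<close>

text \<open>Abstractly, \<open>P x y\<close> plays the role of \<open>|\<langle>x, y\<rangle>|\<^sup>2\<close>, \<open>N x\<close> that of \<open>\<parallel>x\<parallel>\<^sup>2\<close>,
  and \<open>e\<close> that of an orthonormal basis.\<close>

lemma tight_frame_bound:
  fixes P :: "'x \<Rightarrow> 'x \<Rightarrow> real"
  assumes frame: "\<And>x. (\<Sum>a\<in>A. P x (f a)) + (\<Sum>b\<in>B. P x (g b)) = c * N x"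
    and unit_f: "\<And>a. a \<in> A \<Longrightarrow> N (f a) = 1" and unit_g: "\<And>b. b \<in> B \<Longrightarrow> N (g b) = 1"
    and parseval: "\<And>y. (\<Sum>l<n. P (e l) y) = N y" and unit_e: "\<And>l. l < n \<Longrightarrow> N (e l) = 1"
  shows "c * real n = real (card A) + real (card B)"
proof -
  have "c * real n = (\<Sum>l<n. c * N (e l))"
    by (simp add: unit_e)
  also have "\<dots> = (\<Sum>l<n. (\<Sum>a\<in>A. P (e l) (f a)) + (\<Sum>b\<in>B. P (e l) (g b)))"
    by (simp add: frame)
  also have "\<dots> = (\<Sum>a\<in>A. \<Sum>l<n. P (e l) (f a)) + (\<Sum>b\<in>B. \<Sum>l<n. P (e l) (g b))"
    by (simp add: sum.distrib sum.swap[of _ A] sum.swap[of _ B])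
  also have "\<dots> = real (card A) + real (card B)"
    by (simp add: parseval unit_f unit_g)
  finally show ?thesis .
qed

lemma tight_frame_potential_exchange:
  fixes P :: "'x \<Rightarrow> 'x \<Rightarrow> real"
  assumes frame: "\<And>x. (\<Sum>a\<in>A. P x (f a)) + (\<Sum>b\<in>B. P x (g b)) = c * N x"
    and unit_f: "\<And>a. a \<in> A \<Longrightarrow> N (f a) = 1" and unit_g: "\<And>b. b \<in> B \<Longrightarrow> N (g b) = 1"
    and parseval: "\<And>y. (\<Sum>l<n. P (e l) y) = N y" and unit_e: "\<And>l. l < n \<Longrightarrow> N (e l) = 1"
    and sym: "\<And>x y. P x y = P y x"
  shows "real n * (\<Sum>a\<in>A. \<Sum>a'\<in>A. P (f a) (f a')) - (real (card A))\<^sup>2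
    = real n * (\<Sum>b\<in>B. \<Sum>b'\<in>B. P (g b) (g b')) - (real (card B))\<^sup>2"
proof -
  define cross where "cross = (\<Sum>a\<in>A. \<Sum>b\<in>B. P (f a) (g b))"
  have "(\<Sum>a\<in>A. \<Sum>a'\<in>A. P (f a) (f a')) + cross = (\<Sum>a\<in>A. c * N (f a))"
    unfolding cross_def by (simp add: frame flip: sum.distrib)
  then have AA: "(\<Sum>a\<in>A. \<Sum>a'\<in>A. P (f a) (f a')) = real (card A) * c - cross"
    by (simp add: unit_f)
  have "cross = (\<Sum>b\<in>B. \<Sum>a\<in>A. P (g b) (f a))"
    unfolding cross_def by (subst sum.swap) (simp add: sym)
  then have "cross + (\<Sum>b\<in>B. \<Sum>b'\<in>B. P (g b) (g b')) = (\<Sum>b\<in>B. c * N (g b))"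
    by (simp add: frame flip: sum.distrib)
  then have BB: "(\<Sum>b\<in>B. \<Sum>b'\<in>B. P (g b) (g b')) = real (card B) * c - cross"
    by (simp add: unit_g)
  have cn: "c * real n = real (card A) + real (card B)"
    using tight_frame_bound[OF frame unit_f unit_g parseval unit_e] .
  have "real n * (real (card A) * c - cross) - (real (card A))\<^sup>2
      = real (card A) * (c * real n) - real n * cross - (real (card A))\<^sup>2"
    by (simp add: algebra_simps)
  also have "\<dots> = real (card B) * (c * real n) - real n * cross - (real (card B))\<^sup>2"
    unfolding cn by (simp add: algebra_simps power2_eq_square)
  also have "\<dots> = real n * (real (card B) * c - cross) - (real (card B))\<^sup>2"
    by (simp add: algebra_simps)
  finally show ?thesis
    unfolding AA BB .
qed

lemma tight_frame_diagram_gram_bound: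
  fixes P :: "'x \<Rightarrow> 'x \<Rightarrow> real"
  assumes "n \<ge> 2"
    and frame: "\<And>x. (\<Sum>a\<in>A. P x (f a)) + (\<Sum>b\<in>B. P x (g b)) = c * N x"
    and unit_f: "\<And>a. a \<in> A \<Longrightarrow> N (f a) = 1" and unit_g: "\<And>b. b \<in> B \<Longrightarrow> N (g b) = 1"
    and parseval: "\<And>y. (\<Sum>l<n. P (e l) y) = N y" and unit_e: "\<And>l. l < n \<Longrightarrow> N (e l) = 1"
    and sym: "\<And>x y. P x y = P y x" and cauchy_schwarz: "\<And>x y. P x y \<le> N x * N y"
  shows "(\<Sum>a\<in>A. \<Sum>a'\<in>A. (real n * P (f a) (f a') - N (f a) * N (f a')) / (real n - 1))
    \<le> (real (card B))\<^sup>2"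
proof -
  have "(\<Sum>a\<in>A. \<Sum>a'\<in>A. (real n * P (f a) (f a') - N (f a) * N (f a')) / (real n - 1))
      = (real n * (\<Sum>a\<in>A. \<Sum>a'\<in>A. P (f a) (f a')) - (real (card A))\<^sup>2) / (real n - 1)"
    by (simp add: unit_f sum_subtractf sum_distrib_left power2_eq_square flip: sum_divide_distrib)
  also have "\<dots> = (real n * (\<Sum>b\<in>B. \<Sum>b'\<in>B. P (g b) (g b')) - (real (card B))\<^sup>2) / (real n - 1)"
    using tight_frame_potential_exchange[OF frame unit_f unit_g parseval unit_e sym] by simp
  also have "\<dots> \<le> (real n * (real (card B))\<^sup>2 - (real (card B))\<^sup>2) / (real n - 1)"
  proof -
    have "(\<Sum>b\<in>B. \<Sum>b'\<in>B. P (g b) (g b')) \<le> (\<Sum>b\<in>B. \<Sum>b'\<in>B. 1)"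
      by (intro sum_mono) (metis cauchy_schwarz unit_g mult_1)
    then show ?thesis
      using \<open>n \<ge> 2\<close> by (intro divide_right_mono) (simp_all add: power2_eq_square)
  qed
  also have "\<dots> = (real (card B))\<^sup>2"
    using \<open>n \<ge> 2\<close> by (simp add: field_simps)
  finally show ?thesis .
qed

lemma rinner_delta_left: "l < n \<Longrightarrow> rinner n (\<lambda>t. if t = l then 1 else 0) y = y l"
  by (simp add: rinner_def if_distrib[of "\<lambda>t. t * _"] cong: if_cong)

lemma cinner_delta_left: "l < n \<Longrightarrow> cinner n (\<lambda>t. if t = l then 1 else 0) y = cnj (y l)"
  by (simp add: cinner_def if_distrib[of "\<lambda>t. t * _"] cong: if_cong)

lemma rinner_commute: "rinner n x y = rinner n y x"
  by (simp add: rinner_def mult.commute)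

lemma cmod_cinner_commute: "cmod (cinner n x y) = cmod (cinner n y x)"
proof -
  have "cinner n y x = cnj (cinner n x y)"
    by (simp add: cinner_def mult.commute)
  then show ?thesis
    by simp
qed

lemma rinner_cauchy_schwarz: "(rinner n x y)\<^sup>2 \<le> (rnorm n x)\<^sup>2 * (rnorm n y)\<^sup>2"
  unfolding rnorm_power2 rinner_def
  using Cauchy_Schwarz_ineq_sum[of x y "{..<n}"] by (simp add: power2_eq_square)

lemma cinner_cauchy_schwarz: "(cmod (cinner n x y))\<^sup>2 \<le> (cnorm n x)\<^sup>2 * (cnorm n y)\<^sup>2"
proof -
  have "cmod (cinner n x y) \<le> (\<Sum>l<n. cmod (x l) * cmod (y l))"
    unfolding cinner_def by (rule order_trans[OF norm_sum]) (simp add: norm_mult)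
  then have "(cmod (cinner n x y))\<^sup>2 \<le> (\<Sum>l<n. cmod (x l) * cmod (y l))\<^sup>2"
    by (intro power_mono) auto
  also have "\<dots> \<le> (cnorm n x)\<^sup>2 * (cnorm n y)\<^sup>2"
    unfolding cnorm_power2 by (rule Cauchy_Schwarz_ineq_sum)
  finally show ?thesis .
qed

lemma real_untf_diagram_gram_le:
  fixes f :: "'a \<Rightarrow> nat \<Rightarrow> real" and g :: "'b \<Rightarrow> nat \<Rightarrow> real"
  assumes "n \<ge> 2" and "real_untf n (Inl ` A \<union> Inr ` B) (case_sum f g)"
  shows "(\<Sum>i\<in>A. \<Sum>j\<in>A. rinner_list (real_diagram n (f i)) (real_diagram n (f j))) \<le> (real (card B))\<^sup>2"
proof -
  obtain c where "finite (A <+> B)" and unit: "\<And>t. t \<in> A <+> B \<Longrightarrow> rnorm n (case_sum f g t) = 1"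
    and frame: "\<And>x. (\<Sum>t\<in>A <+> B. \<bar>rinner n x (case_sum f g t)\<bar>\<^sup>2) = c * (rnorm n x)\<^sup>2"
    using assms(2) unfolding real_untf_def Plus_def by blast
  then have "finite A" "finite B"
    by (auto dest: finite_PlusD)
  have "(\<Sum>a\<in>A. \<Sum>a'\<in>A. (real n * (rinner n (f a) (f a'))\<^sup>2 - (rnorm n (f a))\<^sup>2 * (rnorm n (f a'))\<^sup>2)
      / (real n - 1)) \<le> (real (card B))\<^sup>2"
  proof (rule tight_frame_diagram_gram_bound[where P = "\<lambda>x y. (rinner n x y)\<^sup>2" and N = "\<lambda>x. (rnorm n x)\<^sup>2"
        and f = f and g = g and e = "\<lambda>l t. if t = l then 1 else 0"])
    show "(\<Sum>a\<in>A. (rinner n x (f a))\<^sup>2) + (\<Sum>b\<in>B. (rinner n x (g b))\<^sup>2) = c * (rnorm n x)\<^sup>2" for x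
      using frame[of x] \<open>finite A\<close> \<open>finite B\<close> by (simp add: sum.Plus comp_def)
    show "(\<Sum>l<n. (rinner n (\<lambda>t. if t = l then 1 else 0) y)\<^sup>2) = (rnorm n y)\<^sup>2" for y
    proof -
      have "(\<Sum>l<n. (rinner n (\<lambda>t. if t = l then 1 else 0) y)\<^sup>2) = (\<Sum>l<n. (y l)\<^sup>2)"
        by (intro sum.cong refl) (simp add: rinner_delta_left)
      then show ?thesis
        unfolding rnorm_power2 rinner_def by (simp add: power2_eq_square)
    qed
    show "(rnorm n (f a))\<^sup>2 = 1" if "a \<in> A" for a
      using unit[OF InlI[OF that]] by simp
    show "(rnorm n (g b))\<^sup>2 = 1" if "b \<in> B" for b
      using unit[OF InrI[OF that]] by simp
    show "(rnorm n (\<lambda>t. if t = l then 1 else 0))\<^sup>2 = 1" if "l < n" for l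
      using that by (simp add: rnorm_power2 rinner_delta_left)
    show "(rinner n x y)\<^sup>2 = (rinner n y x)\<^sup>2" for x y
      by (simp add: rinner_commute)
  qed (fact assms(1) rinner_cauchy_schwarz)+
  then show ?thesis
    using assms(1) by (simp add: rinner_list_real_diagram)
qed

lemma complex_untf_diagram_gram_le:
  fixes f :: "'a \<Rightarrow> nat \<Rightarrow> complex" and g :: "'b \<Rightarrow> nat \<Rightarrow> complex"
  assumes "n \<ge> 2" and "complex_untf n (Inl ` A \<union> Inr ` B) (case_sum f g)"
  shows "\<exists>r \<le> (real (card B))\<^sup>2.
    (\<Sum>i\<in>A. \<Sum>j\<in>A. cinner_list (complex_diagram n (f i)) (complex_diagram n (f j))) = complex_of_real r"
proof -
  obtain c where "finite (A <+> B)" and unit: "\<And>t. t \<in> A <+> B \<Longrightarrow> cnorm n (case_sum f g t) = 1"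
    and frame: "\<And>x. (\<Sum>t\<in>A <+> B. (cmod (cinner n x (case_sum f g t)))\<^sup>2) = c * (cnorm n x)\<^sup>2"
    using assms(2) unfolding complex_untf_def Plus_def by blast
  then have "finite A" "finite B"
    by (auto dest: finite_PlusD)
  have "(\<Sum>a\<in>A. \<Sum>a'\<in>A. (real n * (cmod (cinner n (f a) (f a')))\<^sup>2 - (cnorm n (f a))\<^sup>2 * (cnorm n (f a'))\<^sup>2)
      / (real n - 1)) \<le> (real (card B))\<^sup>2"
  proof (rule tight_frame_diagram_gram_bound[where P = "\<lambda>x y. (cmod (cinner n x y))\<^sup>2"
        and N = "\<lambda>x. (cnorm n x)\<^sup>2" and f = f and g = g and e = "\<lambda>l t. if t = l then 1 else 0"])
    show "(\<Sum>a\<in>A. (cmod (cinner n x (f a)))\<^sup>2) + (\<Sum>b\<in>B. (cmod (cinner n x (g b)))\<^sup>2) = c * (cnorm n x)\<^sup>2" for x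
      using frame[of x] \<open>finite A\<close> \<open>finite B\<close> by (simp add: sum.Plus comp_def)
    show "(\<Sum>l<n. (cmod (cinner n (\<lambda>t. if t = l then 1 else 0) y))\<^sup>2) = (cnorm n y)\<^sup>2" for y
      unfolding cnorm_power2 by (intro sum.cong refl) (simp add: cinner_delta_left)
    show "(cnorm n (\<lambda>t. if t = l then 1 else 0))\<^sup>2 = 1" if "l < n" for l
      using that by (simp add: cnorm_power2 if_distrib[of "\<lambda>t. (cmod t)\<^sup>2"] cong: if_cong)
    show "(cnorm n (f a))\<^sup>2 = 1" if "a \<in> A" for a
      using unit[OF InlI[OF that]] by simp
    show "(cnorm n (g b))\<^sup>2 = 1" if "b \<in> B" for b
      using unit[OF InrI[OF that]] by simp
    show "(cmod (cinner n x y))\<^sup>2 = (cmod (cinner n y x))\<^sup>2" for x y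
      by (simp only: cmod_cinner_commute)
  qed (fact assms(1) cinner_cauchy_schwarz)+
  moreover have "(\<Sum>i\<in>A. \<Sum>j\<in>A. cinner_list (complex_diagram n (f i)) (complex_diagram n (f j)))
      = complex_of_real (\<Sum>a\<in>A. \<Sum>a'\<in>A. (real n * (cmod (cinner n (f a) (f a')))\<^sup>2
          - (cnorm n (f a))\<^sup>2 * (cnorm n (f a'))\<^sup>2) / (real n - 1))"
    using assms(1) by (simp add: cinner_list_complex_diagram)
  ultimately show ?thesis
    by blast
qed

theorem theorem3p1:
  fixes n k p q :: nat and I :: "nat set"
  shows
  "(\<forall>(f :: nat \<Rightarrow> nat \<Rightarrow> real) (g :: nat \<Rightarrow> nat \<Rightarrow> real).
      n \<ge> 2 \<longrightarrow> real_untf n {1..k} f \<longrightarrow> I \<subseteq> {1..k} \<longrightarrow> card I = p \<longrightarrow>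
      (\<forall>j<q. rnorm n (g j) = 1) \<longrightarrow>
      real_untf n (Inl ` ({1..k} - I) \<union> Inr ` {..<q}) (case_sum f g) \<longrightarrow>
      (\<Sum>i\<in>{1..k} - I. \<Sum>j\<in>{1..k} - I.
          rinner_list (real_diagram n (f i)) (real_diagram n (f j))) \<le> (real q)\<^sup>2)
   \<and>
   (\<forall>(f :: nat \<Rightarrow> nat \<Rightarrow> complex) (g :: nat \<Rightarrow> nat \<Rightarrow> complex).
      n \<ge> 2 \<longrightarrow> complex_untf n {1..k} f \<longrightarrow> I \<subseteq> {1..k} \<longrightarrow> card I = p \<longrightarrow>
      (\<forall>j<q. cnorm n (g j) = 1) \<longrightarrow>
      complex_untf n (Inl ` ({1..k} - I) \<union> Inr ` {..<q}) (case_sum f g) \<longrightarrow>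
      (let S = (\<Sum>i\<in>{1..k} - I. \<Sum>j\<in>{1..k} - I.
          cinner_list (complex_diagram n (f i)) (complex_diagram n (f j)))
       in Im S = 0 \<and> Re S \<le> (real q)\<^sup>2))"
proof (intro conjI allI impI)
  fix f g :: "nat \<Rightarrow> nat \<Rightarrow> real"
  assume "n \<ge> 2" "real_untf n (Inl ` ({1..k} - I) \<union> Inr ` {..<q}) (case_sum f g)"
  from real_untf_diagram_gram_le[OF this]
  show "(\<Sum>i\<in>{1..k} - I. \<Sum>j\<in>{1..k} - I.
      rinner_list (real_diagram n (f i)) (real_diagram n (f j))) \<le> (real q)\<^sup>2"
    by simp
next
  fix f g :: "nat \<Rightarrow> nat \<Rightarrow> complex"
  assume "n \<ge> 2" "complex_untf n (Inl ` ({1..k} - I) \<union> Inr ` {..<q}) (case_sum f g)"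
  then obtain r where "r \<le> (real q)\<^sup>2" and "(\<Sum>i\<in>{1..k} - I. \<Sum>j\<in>{1..k} - I.
      cinner_list (complex_diagram n (f i)) (complex_diagram n (f j))) = complex_of_real r"
    using complex_untf_diagram_gram_le[of n "{1..k} - I" "{..<q}" f g] by auto
  then show "let S = (\<Sum>i\<in>{1..k} - I. \<Sum>j\<in>{1..k} - I.
      cinner_list (complex_diagram n (f i)) (complex_diagram n (f j)))
    in Im S = 0 \<and> Re S \<le> (real q)\<^sup>2"
    by (simp add: Let_def)
qed

end
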